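(* There is $J$ such that for all $j\ge J$ the following holds: if $a_{ij}$ and $a_{kl}$ are distinct points in the same cluster, with common potential $t$, then $$a_{kl}-a_{ij}=\frac{2\pi i\,(s_{k(l+H)}-s_{i(j+H)})}{d\,(F^{\circ H})'(t)}\,\nu\,\delta,$$ where $H=H(a_{ij},a_{kl})$, for some $\nu\in A_{t,H-1}$ and $\delta\in D_{i(j+H)}^{k(l+H)}$.
   Context: Setting: $d\ge1$, $f_0=p\circ\exp$ with $p$ monic of degree $d$; orbits $\mathcal{O}_i=\{a_{ij}\}_{j\ge0}$ of $f_0$ ($i=1,\dots,m$) escape on pairwise distinct dynamic rays; $P_f=\bigcup_i\mathcal{O}_i$. $t_{ij}$ is the potential of $a_{ij}$ and $s_{ij}$ the first entry of its external address, with $a_{ij}=t_{ij}+2\pi i s_{ij}/d+O(e^{-t_{ij}/2})$; potentials satisfy $t_{i(j+1)}=F(t_{ij})$ where $F(t)=e^{dt}-1$. Points $a_{ij},a_{kl}$ are in the same cluster if $t_{ij}=t_{kl}$ and $s_{ij}=s_{kl}$. For a pair in the same cluster, $H(a_{ij},a_{kl})$ is the smallest positive integer $H$ such that $a_{i(j+H)}$ and $a_{k(l+H)}$ lie in different clusters. $A_{x,n}$ is the set of $\alpha\neq0$ with $|\log|\alpha||<\sum_{r=0}^n e^{-F^r(x)/3}$ and $|\arg\alpha|<\sum_{r=0}^n e^{-F^r(x)/3}$. For $a_{ij},a_{kl}$ with equal potential in different clusters, $D_{ij}^{kl}:=\left\{\frac{d(w-z)}{2\pi i(s_{kl}-s_{ij})}: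 w\in\mathbb{D}_{1/l}(a_{kl}), z\in\mathbb{D}_{1/j}(a_{ij})\right\}$. *)

theory Defs
  imports "HOL-Analysis.Analysis" "HOL-Computational_Algebra.Polynomial"
begin

definition potF :: "nat \<Rightarrow> real \<Rightarrow> real" where
  "potF d x = exp (real d * x) - 1"

text \<open>Orbits are indexed by i (1..m) and time j; a i j is the point a_ij,
  t i j its potential, s i j the first entry of its external address.\<close>
definition same_cluster ::
  "(nat \<Rightarrow> nat \<Rightarrow> real) \<Rightarrow> (nat \<Rightarrow> nat \<Rightarrow> int) \<Rightarrow> nat \<Rightarrow> nat \<Rightarrow> nat \<Rightarrow> nat \<Rightarrow> bool" where
  "same_cluster t s i j k l \<longleftrightarrow> t i j = t k l \<and> s i j = s k l"

definition sepH ::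
  "(nat \<Rightarrow> nat \<Rightarrow> real) \<Rightarrow> (nat \<Rightarrow> nat \<Rightarrow> int) \<Rightarrow> nat \<Rightarrow> nat \<Rightarrow> nat \<Rightarrow> nat \<Rightarrow> nat" where
  "sepH t s i j k l = (LEAST H. 0 < H \<and> \<not> same_cluster t s i (j + H) k (l + H))"

definition Aset :: "nat \<Rightarrow> real \<Rightarrow> nat \<Rightarrow> complex set" where
  "Aset d x n = {\<alpha>. \<alpha> \<noteq> 0 \<and>
      \<bar>ln (cmod \<alpha>)\<bar> < (\<Sum>r = 0..n. exp (- ((potF d ^^ r) x) / 3)) \<and>
      \<bar>Arg \<alpha>\<bar> < (\<Sum>r = 0..n. exp (- ((potF d ^^ r) x) / 3))}"

definition Dset ::
  "nat \<Rightarrow> (nat \<Rightarrow> nat \<Rightarrow> complex) \<Rightarrow> (nat \<Rightarrow> nat \<Rightarrow> int) \<Rightarrow> nat \<Rightarrow> nat \<Rightarrow> nat \<Rightarrow> nat \<Rightarrow> complex set" where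
  "Dset d a s i j k l =
     {of_nat d * (w - z) / (2 * of_real pi * \<i> * of_int (s k l - s i j)) | w z.
        w \<in> ball (a k l) (1 / real l) \<and> z \<in> ball (a i j) (1 / real j)}"

end

theory Submission
  imports Defs "HOL-Complex_Analysis.Weierstrass_Factorization" "HOL-Real_Asymp.Real_Asymp"
begin

text \<open>
  Two points of one cluster with potential t lie within O(exp(-t/2)) of their common centre
  t + 2 pi i s/d. Near that centre the leading monomial of p dominates, so the derivative of
  p o exp is d exp(d t) (1 + O(exp(-t/2))), and one iteration multiplies the difference of the
  two points by F'(t) exp(lambda) with |lambda| = O(exp(-t/2)). During the H iterations in which
  the orbits share a cluster the difference is thus multiplied by (F^H)'(t) exp(Lambda), where
  |Lambda| < sum r<H. exp(-F^r(t)/3) < 1. Then nu = exp(-Lambda), and delta is the difference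
  after H steps divided by 2 pi i (s' - s)/d.
\<close>

section \<open>Growth of the potential map\<close>

lemma potF_ge_quadratic:
  assumes "d \<ge> 1" "x \<ge> 0"
  shows "x + x\<^sup>2 / 2 \<le> potF d x"
proof -
  have "1 + x + x\<^sup>2 / 2 \<le> exp x"
    using exp_lower_Taylor_quadratic assms(2) by blast
  also have "exp x \<le> exp (real d * x)"
    using assms by (simp add: mult_le_cancel_right1)
  finally show ?thesis by (simp add: potF_def)
qed

lemma funpow_potF_ge:
  assumes "d \<ge> 1" "x \<ge> 0"
  shows "x + real n * x\<^sup>2 / 2 \<le> (potF d ^^ n) x"
proof (induction n)
  case (Suc n)
  have "0 \<le> real n * x\<^sup>2 / 2"
    by simp
  then have "x \<le> (potF d ^^ n) x"
    using Suc by linarith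
  then have "x\<^sup>2 \<le> ((potF d ^^ n) x)\<^sup>2"
    using assms(2) by (intro power_mono) auto
  moreover have "(potF d ^^ n) x + ((potF d ^^ n) x)\<^sup>2 / 2 \<le> (potF d ^^ Suc n) x"
    using potF_ge_quadratic[OF assms(1)] \<open>x \<le> (potF d ^^ n) x\<close> assms(2) by simp
  ultimately show ?case
    using Suc by (simp add: field_simps)
qed simp

lemma filterlim_funpow_potF_at_top:
  assumes "d \<ge> 1" "x > 0"
  shows "filterlim (\<lambda>n. (potF d ^^ n) x) at_top sequentially"
proof (rule filterlim_at_top_mono)
  show "filterlim (\<lambda>n. x + real n * x\<^sup>2 / 2) at_top sequentially"
    using assms(2) by real_asymp
  show "\<forall>\<^sub>F n in sequentially. x + real n * x\<^sup>2 / 2 \<le> (potF d ^^ n) x"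
    using funpow_potF_ge assms by (simp add: less_imp_le)
qed

lemma sum_exp_funpow_potF_less_1:
  assumes "d \<ge> 1" "x \<ge> 3"
  shows "(\<Sum>r<n. exp (- (potF d ^^ r) x / 3)) < 1"
proof -
  have "exp (- (potF d ^^ r) x / 3) \<le> (1/2) ^ Suc r" for r
  proof -
    have "3 \<le> x\<^sup>2 / 2"
      using assms(2) power_mono[of 3 x 2] by simp
    then have "3 * real r \<le> real r * x\<^sup>2 / 2"
      by (simp add: mult.commute mult_left_mono)
    then have "- (potF d ^^ r) x / 3 \<le> real (Suc r) * (- 1)"
      using funpow_potF_ge[OF assms(1), of x r] assms(2) by simp
    then have "exp (- (potF d ^^ r) x / 3) \<le> exp (real (Suc r) * (- 1))"
      by (simp only: exp_le_cancel_iff)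
    also have "\<dots> = exp (- 1) ^ Suc r"
      by (rule exp_of_nat_mult)
    also have "\<dots> \<le> (1/2) ^ Suc r"
      using exp_ge_add_one_self[of 1] by (intro power_mono) (simp_all add: exp_minus field_simps)
    finally show ?thesis .
  qed
  then have "(\<Sum>r<n. exp (- (potF d ^^ r) x / 3)) \<le> (\<Sum>r<n. (1/2) ^ Suc r)"
    by (intro sum_mono)
  also have "(\<Sum>r<n. (1/2::real) ^ Suc r) = 1 - (1/2) ^ n"
    by (induction n) (auto simp: field_simps)
  also have "\<dots> < 1"
    by simp
  finally show ?thesis .
qed

lemma funpow_potF_has_real_derivative:
  "((potF d ^^ n) has_real_derivative (\<Prod>q<n. real d * exp (real d * (potF d ^^ q) x))) (at x)"
proof (induction n)
  case (Suc n)
  have "(potF d has_real_derivative real d * exp (real d * y)) (at y)" for y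
    unfolding potF_def by (auto intro!: derivative_eq_intros)
  from DERIV_chain[OF this Suc] show ?case
    by (simp add: comp_def mult.commute)
qed (simp add: DERIV_ident[unfolded id_def])

lemma norm_poly_le_power:
  fixes q :: "'a::real_normed_field poly"
  assumes "1 \<le> norm w" "degree q \<le> n"
  shows "norm (poly q w) \<le> (\<Sum>i\<le>degree q. norm (coeff q i)) * norm w ^ n"
proof -
  have "norm (poly q w) = norm (\<Sum>i\<le>degree q. coeff q i * w ^ i)"
    by (simp add: poly_altdef)
  also have "\<dots> \<le> (\<Sum>i\<le>degree q. norm (coeff q i) * norm w ^ i)"
    by (rule order_trans[OF norm_sum]) (simp add: norm_mult norm_power)
  also have "\<dots> \<le> (\<Sum>i\<le>degree q. norm (coeff q i) * norm w ^ n)"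
    using assms by (intro sum_mono mult_left_mono power_increasing) auto
  finally show ?thesis
    by (simp add: sum_distrib_right)
qed

lemma monic_pderiv_mult_bound:
  fixes p :: "'a::real_normed_field poly"
  assumes "lead_coeff p = 1" "degree p = d"
  shows "\<exists>K\<ge>0. \<forall>w. 1 \<le> norm w \<longrightarrow>
           norm (poly (pderiv p) w * w - of_nat d * w ^ d) \<le> K * norm w ^ (d - 1)"
proof -
  define q where "q = pCons 0 (pderiv p) - monom (of_nat d) d"
  have poly_q: "poly q w = poly (pderiv p) w * w - of_nat d * w ^ d" for w
    by (simp add: q_def poly_monom mult.commute)
  have "coeff q n = 0" if "d \<le> n" for n
  proof (cases n)
    case (Suc n')
    have "coeff p n = (if n = d then 1 else 0)"
      using assms that coeff_eq_0[of p n] by auto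
    then show ?thesis
      by (simp add: q_def coeff_monom coeff_pderiv Suc)
  qed (simp add: q_def coeff_monom)
  then have "degree q \<le> d - 1"
    by (intro degree_le) auto
  then show ?thesis
    using norm_poly_le_power[of _ q] poly_q by (metis sum_nonneg norm_ge_zero)
qed

lemma small_log_near_one:
  fixes u :: complex
  assumes "norm (u - 1) < 1/2"
  shows "\<exists>v. u = exp v \<and> norm v \<le> 2 * norm (u - 1)"
proof -
  have "u \<noteq> 0"
    using assms by auto
  then show ?thesis
    using norm_Ln_le[of "u - 1"] assms by (intro exI[of _ "Ln u"]) simp
qed

section \<open>Cluster centres\<close>

definition cluster_center :: "nat \<Rightarrow> real \<Rightarrow> int \<Rightarrow> complex" where
  "cluster_center d x \<sigma> = of_real x + 2 * of_real pi * \<i> * of_int \<sigma> / of_nat d"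

lemma exp_mult_cluster_center:
  assumes "d \<ge> 1"
  shows "exp (of_nat d * cluster_center d x \<sigma>) = of_real (exp (d * x))"
proof -
  have "of_nat d * cluster_center d x \<sigma> = of_real (d * x) + of_real (2 * of_int \<sigma> * pi) * \<i>"
    using assms by (simp add: cluster_center_def field_simps)
  then have "exp (of_nat d * cluster_center d x \<sigma>)
      = exp (of_real (d * x)) * exp (of_real (2 * of_int \<sigma> * pi) * \<i>)"
    by (simp add: exp_add)
  also have "exp (of_real (2 * of_int \<sigma> * pi) * \<i>) = 1"
    using exp_integer_2pi[of "of_int \<sigma>"] by simp
  finally show ?thesis
    by (simp only: exp_of_real mult_1_right)
qed

lemma monomial_near_cluster_center:
  fixes z :: complex
  assumes "d \<ge> 1" "cmod (z - cluster_center d x \<sigma>) \<le> \<rho>" "d * \<rho> \<le> 1/2"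
  shows "cmod (of_nat d * exp z ^ d - of_real (d * exp (d * x)))
           \<le> d * exp (d * x) * (3/2 * (d * \<rho>))"
proof -
  define c where "c = cluster_center d x \<sigma>"
  define L where "L = d * exp (d * x)"
  have "exp z ^ d = exp (of_nat d * c) * exp (of_nat d * (z - c))"
    by (simp add: algebra_simps flip: exp_of_nat_mult exp_add)
  then have "of_nat d * exp z ^ d - of_real L = of_real L * (exp (of_nat d * (z - c)) - 1)"
    unfolding c_def exp_mult_cluster_center[OF assms(1)] by (simp add: L_def algebra_simps)
  then have "cmod (of_nat d * exp z ^ d - of_real L) = L * cmod (exp (of_nat d * (z - c)) - 1)"
    by (simp add: norm_mult L_def)
  moreover have "cmod (exp (of_nat d * (z - c)) - 1) \<le> 3/2 * (d * \<rho>)"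
  proof -
    have dz: "cmod (of_nat d * (z - c)) \<le> d * \<rho>"
      using assms(2) by (simp add: c_def norm_mult mult_left_mono)
    with assms(3) have "cmod (of_nat d * (z - c)) \<le> 1/2"
      by linarith
    from norm_exp_bounds(2)[OF this] dz show ?thesis
      by linarith
  qed
  moreover have "0 \<le> L"
    by (simp add: L_def)
  ultimately show ?thesis
    unfolding L_def by (metis mult_left_mono)
qed

lemma
  assumes "same_cluster t s i j k l" "s i (j + n) \<noteq> s k (l + n)"
  shows sepH_pos: "0 < sepH t s i j k l"
    and sepH_separates: "\<not> same_cluster t s i (j + sepH t s i j k l) k (l + sepH t s i j k l)"
    and same_cluster_before_sepH:
      "r < sepH t s i j k l \<Longrightarrow> same_cluster t s i (j + r) k (l + r)"
proof -
  let ?P = "\<lambda>H. 0 < H \<and> \<not> same_cluster t s i (j + H) k (l + H)"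
  have "?P n"
    using assms by (cases n) (auto simp: same_cluster_def)
  then show "0 < sepH t s i j k l" "\<not> same_cluster t s i (j + sepH t s i j k l) k (l + sepH t s i j k l)"
    using LeastI[of ?P] by (auto simp: sepH_def)
  show "same_cluster t s i (j + r) k (l + r)" if "r < sepH t s i j k l"
    using assms(1) not_less_Least[of r ?P] that by (cases "r = 0") (auto simp: sepH_def)
qed

lemma exp_mem_Aset:
  assumes "cmod \<Lambda> < (\<Sum>r = 0..n. exp (- (potF d ^^ r) x / 3))"
    and "(\<Sum>r = 0..n. exp (- (potF d ^^ r) x / 3)) \<le> pi"
  shows "exp \<Lambda> \<in> Aset d x n"
proof -
  have "\<bar>Re \<Lambda>\<bar> < (\<Sum>r = 0..n. exp (- (potF d ^^ r) x / 3))"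
    "\<bar>Im \<Lambda>\<bar> < (\<Sum>r = 0..n. exp (- (potF d ^^ r) x / 3))"
    using abs_Re_le_cmod[of \<Lambda>] abs_Im_le_cmod[of \<Lambda>] assms(1) by linarith+
  moreover from this(2) have "Arg (exp \<Lambda>) = Im \<Lambda>"
    using assms(2) by (intro Arg_exp) auto
  ultimately show ?thesis
    by (simp add: Aset_def)
qed

lemma Dset_mem_centers:
  assumes "0 < j" "0 < l"
  shows "of_nat d * (a k l - a i j) / (2 * of_real pi * \<i> * of_int (s k l - s i j)) \<in> Dset d a s i j k l"
  using assms unfolding Dset_def by force

lemma cluster_difference_representation:
  fixes a :: "nat \<Rightarrow> nat \<Rightarrow> complex" and s :: "nat \<Rightarrow> nat \<Rightarrow> int" and D :: real
  assumes "d \<ge> 1" "0 < H" "s k (l + H) \<noteq> s i (j + H)" "D \<noteq> 0"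
    and expansion: "a k (l + H) - a i (j + H) = (a k l - a i j) * of_real D * exp \<Lambda>"
    and "cmod \<Lambda> < (\<Sum>r<H. exp (- (potF d ^^ r) x / 3))"
    and "(\<Sum>r<H. exp (- (potF d ^^ r) x / 3)) \<le> pi"
  shows "\<exists>\<nu>\<in>Aset d x (H - 1). \<exists>\<delta>\<in>Dset d a s i (j + H) k (l + H).
           a k l - a i j = 2 * of_real pi * \<i> * of_int (s k (l + H) - s i (j + H))
                             / (of_nat d * of_real D) * \<nu> * \<delta>"
proof (intro bexI)
  have "{0..H - 1} = {..<H}"
    using \<open>0 < H\<close> by auto
  then show "exp (- \<Lambda>) \<in> Aset d x (H - 1)"
    using assms(6,7) by (intro exp_mem_Aset) simp_all
  show "of_nat d * (a k (l + H) - a i (j + H)) / (2 * of_real pi * \<i> * of_int (s k (l + H) - s i (j + H)))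
      \<in> Dset d a s i (j + H) k (l + H)"
    using \<open>0 < H\<close> by (intro Dset_mem_centers) auto
  show "a k l - a i j = 2 * of_real pi * \<i> * of_int (s k (l + H) - s i (j + H)) / (of_nat d * of_real D)
      * exp (- \<Lambda>) * (of_nat d * (a k (l + H) - a i (j + H))
                      / (2 * of_real pi * \<i> * of_int (s k (l + H) - s i (j + H))))"
    using assms(1,3,4) unfolding expansion by (simp add: exp_minus field_simps)
qed

section \<open>Estimates near a cluster centre\<close>

locale exp_poly_estimates =
  fixes d :: nat and p :: "complex poly" and K C :: real
  assumes d_pos: "d \<ge> 1" and K_nonneg: "0 \<le> K" and C_nonneg: "0 \<le> C"
    and pderiv_bound: "\<And>w. 1 \<le> cmod w \<Longrightarrow>
      cmod (poly (pderiv p) w * w - of_nat d * w ^ d) \<le> K * cmod w ^ (d - 1)"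
begin

definition near_center :: "real \<Rightarrow> int \<Rightarrow> complex \<Rightarrow> bool" where
  "near_center x \<sigma> z \<longleftrightarrow> cmod (z - cluster_center d x \<sigma>) \<le> C * exp (- x / 2)"

text \<open>In the relative error, K exp d comes from the lower-order terms of p and 3/2 d C from the
  distance to the cluster centre.\<close>

definition rel_error :: "real \<Rightarrow> real" where
  "rel_error x = (K * exp d + 3/2 * d * C) * exp (- x / 2)"

definition large_potential :: "real \<Rightarrow> bool" where
  "large_potential x \<longleftrightarrow>
     1 \<le> x \<and> d * C * exp (- x / 2) \<le> 1/2 \<and> 2 * rel_error x < exp (- x / 3)"

lemma eventually_large_potential: "\<forall>\<^sub>F x in at_top. large_potential x"
proof -
  define A where "A = 2 * (K * exp d + 3/2 * d * C)"
  have "((\<lambda>x. d * C * exp (- x / 2)) \<longlongrightarrow> 0) at_top"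
    by real_asymp
  then have "\<forall>\<^sub>F x in at_top. d * C * exp (- x / 2) < 1/2"
    by (rule order_tendstoD) simp
  moreover have "((\<lambda>x. A * exp (- x / 6)) \<longlongrightarrow> 0) at_top"
    by real_asymp
  then have "\<forall>\<^sub>F x in at_top. A * exp (- x / 6) < 1"
    by (rule order_tendstoD) simp
  then have "\<forall>\<^sub>F x in at_top. 2 * rel_error x < exp (- x / 3)"
  proof (rule eventually_mono)
    fix x assume "A * exp (- x / 6) < 1"
    have "2 * rel_error x = A * exp (- x / 6) * exp (- x / 3)"
      unfolding rel_error_def A_def mult.assoc exp_add[symmetric] by simp
    also have "\<dots> < 1 * exp (- x / 3)"
      using \<open>A * exp (- x / 6) < 1\<close> by (intro mult_strict_right_mono) auto
    finally show "2 * rel_error x < exp (- x / 3)"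
      by simp
  qed
  ultimately show ?thesis
    using eventually_ge_at_top[of 1] unfolding large_potential_def
    by eventually_elim simp
qed

lemma rel_error_nonneg: "0 \<le> rel_error x"
  by (simp add: rel_error_def K_nonneg C_nonneg)

lemma rel_error_less_half:
  assumes "large_potential x"
  shows "rel_error x < 1/2"
proof -
  have "1 \<le> x" "2 * rel_error x < exp (- x / 3)"
    using assms by (simp_all add: large_potential_def)
  moreover from this(1) have "exp (- x / 3) \<le> 1"
    by simp
  ultimately show ?thesis
    by linarith
qed

lemma pderiv_exp_estimate:
  fixes x :: real and \<sigma> :: int and z :: complex
  assumes x: "1 \<le> x" and small: "d * C * exp (- x / 2) \<le> 1/2" and z: "near_center x \<sigma> z"
  shows "cmod (poly (pderiv p) (exp z) * exp z - of_real (d * exp (d * x)))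
           \<le> d * exp (d * x) * rel_error x"
proof -
  define \<rho> where "\<rho> = C * exp (- x / 2)"
  define L where "L = d * exp (d * x)"
  define w where "w = exp z"
  have z_\<rho>: "cmod (z - cluster_center d x \<sigma>) \<le> \<rho>"
    using z by (simp add: near_center_def \<rho>_def)
  have d_\<rho>: "d * \<rho> \<le> 1/2"
    using small by (simp add: \<rho>_def mult.assoc)
  moreover have "\<rho> \<le> d * \<rho>"
    using d_pos C_nonneg mult_right_mono[of 1 "real d" \<rho>] by (simp add: \<rho>_def)
  moreover have "\<bar>Re z - x\<bar> \<le> \<rho>"
    using abs_Re_le_cmod[of "z - cluster_center d x \<sigma>"] z_\<rho> by (simp add: cluster_center_def)
  ultimately have Re_z: "x - 1 \<le> Re z" "Re z \<le> x + 1"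
    by auto
  have "cmod w ^ (d - 1) = exp (real (d - 1) * Re z)"
    by (simp add: w_def exp_of_nat_mult)
  also have "\<dots> \<le> exp (real (d - 1) * (x + 1))"
    using Re_z by (simp add: mult_left_mono)
  also have "\<dots> \<le> exp (real d * x) * exp (real d) * exp (- x)"
    using d_pos by (simp add: of_nat_diff algebra_simps flip: exp_add)
  also have "\<dots> \<le> L * exp (real d) * exp (- x / 2)"
    unfolding L_def using d_pos x by (intro mult_mono) auto
  finally have "cmod w ^ (d - 1) \<le> L * exp (real d) * exp (- x / 2)" .
  moreover have "1 \<le> cmod w"
    using Re_z x by (simp add: w_def)
  ultimately have "cmod (poly (pderiv p) w * w - of_nat d * w ^ d) \<le> K * (L * exp d * exp (- x / 2))"
    using pderiv_bound K_nonneg by (meson mult_left_mono order_trans)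
  moreover have "cmod (of_nat d * w ^ d - of_real L) \<le> L * (3/2 * (d * \<rho>))"
    using monomial_near_cluster_center[OF d_pos z_\<rho> d_\<rho>] by (simp add: w_def L_def)
  moreover have "cmod (poly (pderiv p) w * w - of_real L)
      \<le> cmod (poly (pderiv p) w * w - of_nat d * w ^ d) + cmod (of_nat d * w ^ d - of_real L)"
    using norm_triangle_ineq[of "poly (pderiv p) w * w - of_nat d * w ^ d" "of_nat d * w ^ d - of_real L"]
    by simp
  ultimately show ?thesis
    by (simp add: w_def L_def rel_error_def \<rho>_def algebra_simps)
qed

lemma poly_exp_difference:
  fixes x :: real and \<sigma> :: int and y z :: complex
  assumes x: "large_potential x"
    and y: "near_center x \<sigma> y" and z: "near_center x \<sigma> z"
  shows "\<exists>v. poly p (exp z) - poly p (exp y) = of_real (d * exp (d * x)) * (z - y) * exp v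
              \<and> cmod v \<le> 2 * rel_error x"
proof (cases "z = y")
  case True
  then show ?thesis
    using rel_error_nonneg by (intro exI[of _ 0]) simp
next
  case False
  define L where "L = d * exp (d * x)"
  define B where "B = cball (cluster_center d x \<sigma>) (C * exp (- x / 2))"
  define f where "f = (\<lambda>u. poly p (exp u) - of_real L * u)"
  have "(f has_field_derivative (poly (pderiv p) (exp u) * exp u - of_real L)) (at u within B)" for u
    unfolding f_def by (auto intro!: derivative_eq_intros)
  moreover have "cmod (poly (pderiv p) (exp u) * exp u - of_real L) \<le> L * rel_error x" if "u \<in> B" for u
    using pderiv_exp_estimate[of x \<sigma> u] x that
    by (simp add: large_potential_def near_center_def B_def L_def dist_norm norm_minus_commute)
  moreover have "y \<in> B" "z \<in> B"
    using y z by (simp_all add: near_center_def B_def dist_norm norm_minus_commute)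
  ultimately have f_bound: "cmod (f z - f y) \<le> L * rel_error x * cmod (z - y)"
    by (intro field_differentiable_bound[of B]) (auto simp: B_def)
  have LD: "of_real L * (z - y) \<noteq> 0"
    using False d_pos by (simp add: L_def)
  define u where "u = (poly p (exp z) - poly p (exp y)) / (of_real L * (z - y))"
  have "u - 1 = (f z - f y) / (of_real L * (z - y))"
    using LD by (simp add: u_def f_def field_simps)
  then have "cmod (u - 1) \<le> rel_error x"
    using f_bound LD by (simp add: norm_divide norm_mult divide_le_eq L_def mult_ac)
  moreover obtain v where "u = exp v" "cmod v \<le> 2 * cmod (u - 1)"
    using small_log_near_one[of u] calculation rel_error_less_half[OF x] by force
  moreover have "poly p (exp z) - poly p (exp y) = of_real L * (z - y) * u"
    using LD by (simp add: u_def)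
  ultimately show ?thesis
    by (intro exI[of _ v]) (auto simp: L_def)
qed

lemma orbit_difference_product:
  fixes y z :: "nat \<Rightarrow> complex" and \<sigma> :: "nat \<Rightarrow> int" and x :: real
  assumes "\<And>r. r < n \<Longrightarrow> y (Suc r) = poly p (exp (y r))"
    and "\<And>r. r < n \<Longrightarrow> z (Suc r) = poly p (exp (z r))"
    and "\<And>r. r < n \<Longrightarrow> near_center ((potF d ^^ r) x) (\<sigma> r) (y r)"
    and "\<And>r. r < n \<Longrightarrow> near_center ((potF d ^^ r) x) (\<sigma> r) (z r)"
    and "\<And>r. r < n \<Longrightarrow> large_potential ((potF d ^^ r) x)"
  shows "\<exists>\<Lambda>. z n - y n = (z 0 - y 0) * of_real (\<Prod>r<n. d * exp (d * (potF d ^^ r) x)) * exp \<Lambda>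
              \<and> cmod \<Lambda> \<le> (\<Sum>r<n. 2 * rel_error ((potF d ^^ r) x))"
  using assms
proof (induction n)
  case 0
  show ?case
    by (intro exI[of _ 0]) simp
next
  case (Suc n)
  have "\<exists>\<Lambda>. z n - y n = (z 0 - y 0) * of_real (\<Prod>r<n. d * exp (d * (potF d ^^ r) x)) * exp \<Lambda>
              \<and> cmod \<Lambda> \<le> (\<Sum>r<n. 2 * rel_error ((potF d ^^ r) x))"
    by (rule Suc.IH) (use Suc.prems in auto)
  then obtain \<Lambda> where \<Lambda>:
      "z n - y n = (z 0 - y 0) * of_real (\<Prod>r<n. d * exp (d * (potF d ^^ r) x)) * exp \<Lambda>"
      "cmod \<Lambda> \<le> (\<Sum>r<n. 2 * rel_error ((potF d ^^ r) x))"
    by blast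
  obtain v where v:
      "poly p (exp (z n)) - poly p (exp (y n)) = of_real (d * exp (d * (potF d ^^ n) x)) * (z n - y n) * exp v"
      "cmod v \<le> 2 * rel_error ((potF d ^^ n) x)"
    using poly_exp_difference[of "(potF d ^^ n) x" "\<sigma> n" "y n" "z n"] Suc.prems by auto
  show ?case
  proof (intro exI[of _ "\<Lambda> + v"] conjI)
    show "z (Suc n) - y (Suc n)
        = (z 0 - y 0) * of_real (\<Prod>r<Suc n. d * exp (d * (potF d ^^ r) x)) * exp (\<Lambda> + v)"
      using Suc.prems(1,2)[of n] v(1) \<Lambda>(1) by (simp add: exp_add mult_ac)
    show "cmod (\<Lambda> + v) \<le> (\<Sum>r<Suc n. 2 * rel_error ((potF d ^^ r) x))"
      using norm_triangle_ineq[of \<Lambda> v] \<Lambda>(2) v(2) by simp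
  qed
qed

lemma orbit_difference_deriv_expansion:
  fixes y z :: "nat \<Rightarrow> complex" and \<sigma> :: "nat \<Rightarrow> int" and x :: real
  assumes "\<And>r. r < n \<Longrightarrow> y (Suc r) = poly p (exp (y r))"
    and "\<And>r. r < n \<Longrightarrow> z (Suc r) = poly p (exp (z r))"
    and "\<And>r. r < n \<Longrightarrow> near_center ((potF d ^^ r) x) (\<sigma> r) (y r)"
    and "\<And>r. r < n \<Longrightarrow> near_center ((potF d ^^ r) x) (\<sigma> r) (z r)"
    and large: "\<And>r. r < n \<Longrightarrow> large_potential ((potF d ^^ r) x)"
    and "0 < n"
  shows "\<exists>\<Lambda>. z n - y n = (z 0 - y 0) * of_real (deriv (potF d ^^ n) x) * exp \<Lambda>
              \<and> cmod \<Lambda> < (\<Sum>r<n. exp (- (potF d ^^ r) x / 3))"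
proof -
  have "(\<Sum>r<n. 2 * rel_error ((potF d ^^ r) x)) < (\<Sum>r<n. exp (- (potF d ^^ r) x / 3))"
    using large \<open>0 < n\<close> by (intro sum_strict_mono) (auto simp: large_potential_def)
  moreover have "deriv (potF d ^^ n) x = (\<Prod>r<n. d * exp (d * (potF d ^^ r) x))"
    by (rule DERIV_imp_deriv[OF funpow_potF_has_real_derivative])
  ultimately show ?thesis
    using orbit_difference_product[OF assms(1-5)] by fastforce
qed

end

section \<open>Pairs of orbits in one cluster\<close>

locale cluster_orbits = exp_poly_estimates +
  fixes m :: nat and a :: "nat \<Rightarrow> nat \<Rightarrow> complex" and t :: "nat \<Rightarrow> nat \<Rightarrow> real"
    and s :: "nat \<Rightarrow> nat \<Rightarrow> int"
  assumes orbit: "\<And>i j. i \<in> {1..m} \<Longrightarrow> a i (Suc j) = poly p (exp (a i j))"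
    and pot_pos: "\<And>i j. i \<in> {1..m} \<Longrightarrow> 0 < t i j"
    and pot_step: "\<And>i j. i \<in> {1..m} \<Longrightarrow> t i (Suc j) = potF d (t i j)"
    and orbit_near_center: "\<And>i j. i \<in> {1..m} \<Longrightarrow>
      cmod (a i j - cluster_center d (t i j) (s i j)) \<le> C * exp (- t i j / 2)"
    and distinct_rays: "\<And>i j k l. i \<in> {1..m} \<Longrightarrow> k \<in> {1..m} \<Longrightarrow>
      (\<forall>n. s i (j + n) = s k (l + n)) \<Longrightarrow> i = k \<and> j = l"
begin

lemma potential_shift: "i \<in> {1..m} \<Longrightarrow> t i (j + r) = (potF d ^^ r) (t i j)"
  by (induction r) (simp_all add: pot_step)

lemma eventually_potentials_ge: "\<forall>\<^sub>F j in sequentially. \<forall>i\<in>{1..m}. T \<le> t i j"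
proof (rule eventually_ball_finite)
  show "\<forall>i\<in>{1..m}. \<forall>\<^sub>F j in sequentially. T \<le> t i j"
  proof
    fix i assume i: "i \<in> {1..m}"
    have "(\<lambda>j. (potF d ^^ j) (t i 0)) = t i"
      by (intro ext) (metis potential_shift[OF i] add_0)
    then have "filterlim (t i) at_top sequentially"
      using filterlim_funpow_potF_at_top[OF d_pos pot_pos[OF i, of 0]] by simp
    then show "\<forall>\<^sub>F j in sequentially. T \<le> t i j"
      by (simp add: filterlim_at_top)
  qed
qed simp

lemma same_cluster_orbit_expansion:
  assumes i: "i \<in> {1..m}" and k: "k \<in> {1..m}" and "0 < n"
    and large: "\<And>x. t i j \<le> x \<Longrightarrow> large_potential x"
    and cluster: "\<And>r. r < n \<Longrightarrow> same_cluster t s i (j + r) k (l + r)"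
  shows "\<exists>\<Lambda>. a k (l + n) - a i (j + n) = (a k l - a i j) * of_real (deriv (potF d ^^ n) (t i j)) * exp \<Lambda>
              \<and> cmod \<Lambda> < (\<Sum>r<n. exp (- (potF d ^^ r) (t i j) / 3))"
proof -
  have pot: "t i (j + r) = (potF d ^^ r) (t i j)" "t k (l + r) = (potF d ^^ r) (t i j)" for r
    using potential_shift[OF i] potential_shift[OF k] cluster[OF \<open>0 < n\<close>]
    by (simp_all add: same_cluster_def)
  have "a i (j + Suc r) = poly p (exp (a i (j + r)))" "a k (l + Suc r) = poly p (exp (a k (l + r)))"
    for r
    using orbit[OF i] orbit[OF k] by simp_all
  moreover have "near_center ((potF d ^^ r) (t i j)) (s i (j + r)) (a i (j + r))" for r
    using orbit_near_center[OF i, of "j + r"] by (simp add: near_center_def pot)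
  moreover have "near_center ((potF d ^^ r) (t i j)) (s i (j + r)) (a k (l + r))" if "r < n" for r
    using orbit_near_center[OF k, of "l + r"] cluster[OF that]
    by (simp add: near_center_def same_cluster_def pot)
  moreover have "large_potential ((potF d ^^ r) (t i j))" for r
  proof (rule large)
    have "0 \<le> real r * (t i j)\<^sup>2 / 2"
      by simp
    then show "t i j \<le> (potF d ^^ r) (t i j)"
      using funpow_potF_ge[OF d_pos, of "t i j" r] pot_pos[OF i, of j] by linarith
  qed
  ultimately show ?thesis
    using orbit_difference_deriv_expansion[where y = "\<lambda>r. a i (j + r)" and z = "\<lambda>r. a k (l + r)"
        and \<sigma> = "\<lambda>r. s i (j + r)" and x = "t i j" and n = n] \<open>0 < n\<close>
    by simp
qed

lemma cluster_pair_expansion: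
  assumes i: "i \<in> {1..m}" and k: "k \<in> {1..m}"
    and large: "\<And>x. t i j \<le> x \<Longrightarrow> large_potential x" and "3 \<le> t i j"
    and "a i j \<noteq> a k l" and cluster: "same_cluster t s i j k l"
  shows "let H = sepH t s i j k l; tt = t i j in
           \<exists>\<nu>\<in>Aset d tt (H - 1). \<exists>\<delta>\<in>Dset d a s i (j + H) k (l + H).
             a k l - a i j =
               2 * of_real pi * \<i> * of_int (s k (l + H) - s i (j + H))
                 / (of_nat d * of_real (deriv (potF d ^^ H) tt)) * \<nu> * \<delta>"
proof -
  define H where "H = sepH t s i j k l"
  obtain n where n: "s i (j + n) \<noteq> s k (l + n)"
    using distinct_rays[OF i k] \<open>a i j \<noteq> a k l\<close> by blast
  have "0 < H"
    using sepH_pos[OF cluster n] by (simp add: H_def)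
  obtain \<Lambda> where \<Lambda>:
      "a k (l + H) - a i (j + H) = (a k l - a i j) * of_real (deriv (potF d ^^ H) (t i j)) * exp \<Lambda>"
      "cmod \<Lambda> < (\<Sum>r<H. exp (- (potF d ^^ r) (t i j) / 3))"
    using same_cluster_orbit_expansion[OF i k \<open>0 < H\<close> large
        same_cluster_before_sepH[OF cluster n, folded H_def]]
    by blast
  have "deriv (potF d ^^ H) (t i j) \<noteq> 0"
    unfolding DERIV_imp_deriv[OF funpow_potF_has_real_derivative] using d_pos by simp
  moreover have "s k (l + H) \<noteq> s i (j + H)"
    using sepH_separates[OF cluster n] potential_shift[OF i] potential_shift[OF k] cluster
    by (simp add: H_def same_cluster_def)
  moreover have "(\<Sum>r<H. exp (- (potF d ^^ r) (t i j) / 3)) \<le> pi"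
    using sum_exp_funpow_potF_less_1[OF d_pos \<open>3 \<le> t i j\<close>, of H] pi_gt3 by simp
  ultimately show ?thesis
    using cluster_difference_representation[OF d_pos \<open>0 < H\<close> _ _ \<Lambda>] by (simp add: H_def)
qed

lemma cluster_difference_expansion:
  "\<exists>J. \<forall>j\<ge>J. \<forall>i\<in>{1..m}. \<forall>k\<in>{1..m}. \<forall>l.
     a i j \<noteq> a k l \<and> same_cluster t s i j k l \<longrightarrow>
     (let H = sepH t s i j k l; tt = t i j in
      \<exists>\<nu>\<in>Aset d tt (H - 1). \<exists>\<delta>\<in>Dset d a s i (j + H) k (l + H).
        a k l - a i j =
          2 * of_real pi * \<i> * of_int (s k (l + H) - s i (j + H))
            / (of_nat d * of_real (deriv (potF d ^^ H) tt)) * \<nu> * \<delta>)"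
proof -
  obtain T where T: "\<And>x. T \<le> x \<Longrightarrow> large_potential x"
    using eventually_large_potential by (auto simp: eventually_at_top_linorder)
  obtain J where J: "\<And>j i. J \<le> j \<Longrightarrow> i \<in> {1..m} \<Longrightarrow> max T 3 \<le> t i j"
    using eventually_potentials_ge[of "max T 3"] unfolding eventually_sequentially by blast
  show ?thesis
  proof (intro exI[of _ J] allI impI ballI cluster_pair_expansion; elim conjE)
    fix j i x assume "J \<le> j" "i \<in> {1..m}" "t i j \<le> x"
    then show "large_potential x"
      using J[of j i] T by simp
  qed (use J in auto)
qed

end

theorem mainTheorem5:
  fixes d m :: nat
    and p :: "complex poly"
    and f0 :: "complex \<Rightarrow> complex"
    and a :: "nat \<Rightarrow> nat \<Rightarrow> complex"
    and t :: "nat \<Rightarrow> nat \<Rightarrow> real"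
    and s :: "nat \<Rightarrow> nat \<Rightarrow> int"
  assumes d_pos: "d \<ge> 1"
    and p_monic: "lead_coeff p = 1"
    and p_deg: "degree p = d"
    and f0_def: "f0 = (\<lambda>z. poly p (exp z))"
    and orbit: "\<And>i j. i \<in> {1..m} \<Longrightarrow> a i (Suc j) = f0 (a i j)"
    and escape: "\<And>i. i \<in> {1..m} \<Longrightarrow> filterlim (\<lambda>j. cmod (a i j)) at_top sequentially"
    and pot_pos: "\<And>i j. i \<in> {1..m} \<Longrightarrow> t i j > 0"
    and pot_step: "\<And>i j. i \<in> {1..m} \<Longrightarrow> t i (Suc j) = potF d (t i j)"
    and asymp: "\<exists>C. \<forall>i\<in>{1..m}. \<forall>j.
        cmod (a i j - (of_real (t i j) + 2 * of_real pi * \<i> * of_int (s i j) / of_nat d))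
          \<le> C * exp (- t i j / 2)"
    and distinct_rays: "\<And>i j k l. i \<in> {1..m} \<Longrightarrow> k \<in> {1..m} \<Longrightarrow>
        (\<forall>n. s i (j + n) = s k (l + n)) \<Longrightarrow> i = k \<and> j = l"
  shows "\<exists>J. \<forall>j\<ge>J. \<forall>i\<in>{1..m}. \<forall>k\<in>{1..m}. \<forall>l.
           a i j \<noteq> a k l \<and> same_cluster t s i j k l \<longrightarrow>
           (let H = sepH t s i j k l; tt = t i j in
            \<exists>\<nu>\<in>Aset d tt (H - 1). \<exists>\<delta>\<in>Dset d a s i (j + H) k (l + H).
              a k l - a i j =
                2 * of_real pi * \<i> * of_int (s k (l + H) - s i (j + H))
                  / (of_nat d * of_real (deriv (potF d ^^ H) tt)) * \<nu> * \<delta>)"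
proof -
  obtain C where C: "\<forall>i\<in>{1..m}. \<forall>j.
      cmod (a i j - cluster_center d (t i j) (s i j)) \<le> C * exp (- t i j / 2)"
    using asymp unfolding cluster_center_def by blast
  obtain K where "0 \<le> K" and K: "\<forall>w. 1 \<le> cmod w \<longrightarrow>
      cmod (poly (pderiv p) w * w - of_nat d * w ^ d) \<le> K * cmod w ^ (d - 1)"
    using monic_pderiv_mult_bound[OF p_monic p_deg] by blast
  interpret cluster_orbits d p K "max C 0" m a t s
  proof unfold_locales
    show "cmod (poly (pderiv p) w * w - of_nat d * w ^ d) \<le> K * cmod w ^ (d - 1)"
      if "1 \<le> cmod w" for w
      using K that by blast
    show "a i (Suc j) = poly p (exp (a i j))" if "i \<in> {1..m}" for i j
      using orbit[OF that] by (simp add: f0_def)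
    show "cmod (a i j - cluster_center d (t i j) (s i j)) \<le> max C 0 * exp (- t i j / 2)"
      if "i \<in> {1..m}" for i j
      using C that by (meson max.cobounded1 exp_ge_zero mult_right_mono order_trans)
    show "i = k \<and> j = l"
      if "i \<in> {1..m}" "k \<in> {1..m}" "\<forall>n. s i (j + n) = s k (l + n)" for i j k l
      using distinct_rays[OF that] .
  qed (use d_pos in \<open>simp_all add: \<open>0 \<le> K\<close> pot_pos pot_step\<close>)
  show ?thesis
    by (rule cluster_difference_expansion)
qed

end
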